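(* Let $X,Y,Z,W$ be real-valued random variables on an atomless probability space (no integrability assumed). If $X\le_{\rm cx}Z$ and $Y\le_{\rm cx}W$, then $$X+Y\le_{\rm cx} Z^{\rm co}+W^{\rm co},$$ where $(Z^{\rm co},W^{\rm co})$ is a comonotonic version of $(Z,W)$.
   Context: An expectation $\mathbb E[V]$ is well-defined if $\mathbb E[\max\{V,0\}]<\infty$ or $\mathbb E[\max\{-V,0\}]<\infty$. We write $U\le_{\rm cx}V$ if $\mathbb E[u(U)]\le\mathbb E[u(V)]$ for all convex $u:\mathbb R\to\mathbb R$ such that both expectations are well-defined. A pair $(Z',W')$ is comonotonic if $Z'=f(S)$, $W'=g(S)$ a.s. for some random variable $S$ and increasing functions $f,g$; a comonotonic version of $(Z,W)$ is a comonotonic pair $(Z',W')$ with $Z'$ distributed as $Z$ and $W'$ distributed as $W$. *)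

theory Defs
  imports "HOL-Probability.Probability"
begin

definition exp_well_defined :: "'a measure \<Rightarrow> ('a \<Rightarrow> real) \<Rightarrow> bool" where
  "exp_well_defined M V \<longleftrightarrow>
     (\<integral>\<^sup>+ x. ennreal (max (V x) 0) \<partial>M) < \<infinity> \<or> (\<integral>\<^sup>+ x. ennreal (max (- V x) 0) \<partial>M) < \<infinity>"

definition gen_expectation :: "'a measure \<Rightarrow> ('a \<Rightarrow> real) \<Rightarrow> ereal" where
  "gen_expectation M V =
     enn2ereal (\<integral>\<^sup>+ x. ennreal (max (V x) 0) \<partial>M) - enn2ereal (\<integral>\<^sup>+ x. ennreal (max (- V x) 0) \<partial>M)"

definition cx_le :: "'a measure \<Rightarrow> ('a \<Rightarrow> real) \<Rightarrow> 'b measure \<Rightarrow> ('b \<Rightarrow> real) \<Rightarrow> bool" where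
  "cx_le M U N V \<longleftrightarrow>
     (\<forall>u::real \<Rightarrow> real. convex_on UNIV u \<longrightarrow>
        exp_well_defined M (\<lambda>x. u (U x)) \<longrightarrow> exp_well_defined N (\<lambda>x. u (V x)) \<longrightarrow>
        gen_expectation M (\<lambda>x. u (U x)) \<le> gen_expectation N (\<lambda>x. u (V x)))"

definition atomless :: "'a measure \<Rightarrow> bool" where
  "atomless M \<longleftrightarrow>
     (\<forall>A\<in>sets M. 0 < emeasure M A \<longrightarrow>
        (\<exists>B\<in>sets M. B \<subseteq> A \<and> 0 < emeasure M B \<and> emeasure M B < emeasure M A))"

definition comonotonic :: "'a measure \<Rightarrow> ('a \<Rightarrow> real) \<Rightarrow> ('a \<Rightarrow> real) \<Rightarrow> bool" where
  "comonotonic N Z' W' \<longleftrightarrow>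
     (\<exists>(S::'a \<Rightarrow> real) (f::real \<Rightarrow> real) (g::real \<Rightarrow> real).
        S \<in> borel_measurable N \<and> mono f \<and> mono g \<and>
        (AE \<omega> in N. Z' \<omega> = f (S \<omega>) \<and> W' \<omega> = g (S \<omega>)))"

end

theory Submission
  imports Defs
begin

(* The convex-order hypotheses enter only through the stop-loss transforms E[(V - t)^+]
   of V and of -V, i.e. through the increasing convex order of the variables and of their
   negatives, and these depend only on distributions.  For a comonotonic pair the event
   {Z' + W' > t} is cut out by a single threshold t1 of Z' and t - t1 of W', so
   (Z' + W' - t)^+ = (Z' - t1)^+ + (W' - (t - t1))^+, whereas
   (X + Y - t)^+ <= (X - t1)^+ + (Y - (t - t1))^+ for every pair.  Conversely, stop-loss
   dominance of T by S and of -T by -S gives E u(T) <= E u(S) for convex u: if u has a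
   minimum point it splits into an increasing and a decreasing convex part, each an
   increasing limit of nonnegative combinations of hinge functions (Fatou); in general
   u is truncated from below at its minima over [-k, k] and k tends to infinity. *)

lemma convex_on_max:
  fixes f g :: "'a::real_vector \<Rightarrow> real"
  assumes "convex_on S f" "convex_on S g"
  shows "convex_on S (\<lambda>x. max (f x) (g x))"
proof (rule convex_onI)
  show "convex S" using assms(1) by (rule convex_on_imp_convex)
  fix t :: real and x y assume "0 < t" "t < 1" "x \<in> S" "y \<in> S"
  then have "f ((1 - t) *\<^sub>R x + t *\<^sub>R y) \<le> (1 - t) * f x + t * f y"
    and "g ((1 - t) *\<^sub>R x + t *\<^sub>R y) \<le> (1 - t) * g x + t * g y"
    using assms by (auto intro: convex_onD)
  moreover have "(1 - t) * f x + t * f y \<le> (1 - t) * max (f x) (g x) + t * max (f y) (g y)"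
    and "(1 - t) * g x + t * g y \<le> (1 - t) * max (f x) (g x) + t * max (f y) (g y)"
    using \<open>0 < t\<close> \<open>t < 1\<close> by (intro add_mono mult_left_mono; simp)+
  ultimately show "max (f ((1 - t) *\<^sub>R x + t *\<^sub>R y)) (g ((1 - t) *\<^sub>R x + t *\<^sub>R y))
      \<le> (1 - t) * max (f x) (g x) + t * max (f y) (g y)"
    by linarith
qed

lemma convex_on_hinge: "convex_on UNIV (\<lambda>x::real. max (x - t) 0)"
  by (intro convex_on_max convex_on_diff) (auto simp: convex_on_ident concave_on_const convex_on_const)

lemma convex_on_comp_uminus:
  fixes u :: "real \<Rightarrow> real"
  assumes "convex_on UNIV u"
  shows "convex_on UNIV (\<lambda>x. u (- x))"
proof (rule convex_onI)
  fix t x y :: real assume "0 < t" "t < 1"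
  then show "u (- ((1 - t) *\<^sub>R x + t *\<^sub>R y)) \<le> (1 - t) * u (- x) + t * u (- y)"
    using convex_onD[OF assms, of t "- x" "- y"] by (simp add: algebra_simps)
qed simp

lemma convex_on_borel_measurable:
  fixes u :: "real \<Rightarrow> real"
  assumes "convex_on UNIV u"
  shows "u \<in> borel_measurable borel"
  using convex_on_continuous[OF open_UNIV assms] by (rule borel_measurable_continuous_onI)

text \<open>On the right of a global minimum point a convex function is increasing, so cutting
  off its left branch at the minimum point keeps it convex.\<close>
lemma
  fixes u :: "real \<Rightarrow> real"
  assumes cv: "convex_on UNIV u" and min: "\<And>y. u c \<le> u y"
  shows mono_comp_max_argmin: "mono (\<lambda>x. u (max x c))"
    and convex_on_comp_max_argmin: "convex_on UNIV (\<lambda>x. u (max x c))"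
proof -
  have incr: "u x \<le> u y" if "c \<le> x" "x \<le> y" for x y
  proof (cases "c < x \<and> x < y")
    case True
    then have "(u c - u x) / (c - x) \<le> (u x - u y) / (x - y)"
      using convex_on_slope_le[OF cv UNIV_I UNIV_I] by (meson order_trans)
    moreover have "0 \<le> (u c - u x) / (c - x)"
      using min[of x] True by (intro divide_nonpos_neg) auto
    ultimately have "0 \<le> (u x - u y) / (x - y)" by linarith
    then show ?thesis using True by (simp add: zero_le_divide_iff)
  next
    case False
    then show ?thesis using that min[of y] by (cases "x = c") auto
  qed
  show "mono (\<lambda>x. u (max x c))"
    by (rule monoI) (intro incr; simp add: max_def)
  show "convex_on UNIV (\<lambda>x. u (max x c))"
  proof (rule convex_onI)
    fix t x y :: real assume t: "0 < t" "t < 1"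
    have "convex_on UNIV (\<lambda>x::real. max x c)"
      by (intro convex_on_max) (auto simp: convex_on_ident convex_on_const)
    then have "max ((1 - t) *\<^sub>R x + t *\<^sub>R y) c \<le> (1 - t) * max x c + t * max y c"
      using t by (auto dest!: convex_onD[of _ _ t x y])
    then have "u (max ((1 - t) *\<^sub>R x + t *\<^sub>R y) c) \<le> u ((1 - t) * max x c + t * max y c)"
      by (intro incr) auto
    also have "\<dots> \<le> (1 - t) * u (max x c) + t * u (max y c)"
      using convex_onD[OF cv, of t "max x c" "max y c"] t by simp
    finally show "u (max ((1 - t) *\<^sub>R x + t *\<^sub>R y) c) \<le> (1 - t) * u (max x c) + t * u (max y c)" .
  qed simp
qed

lemma convex_on_secant_extension_le:
  fixes \<phi> :: "real \<Rightarrow> real"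
  assumes "convex_on UNIV \<phi>" "p < q" "q \<le> x"
  shows "\<phi> q + (\<phi> q - \<phi> p) / (q - p) * (x - q) \<le> \<phi> x"
proof (cases "q = x")
  case False
  then have "q < x" using assms(3) by simp
  have "(\<phi> p - \<phi> q) / (p - q) \<le> (\<phi> q - \<phi> x) / (q - x)"
    using convex_on_slope_le[OF assms(1) UNIV_I UNIV_I assms(2) \<open>q < x\<close>] by (rule order_trans)
  then have "(\<phi> q - \<phi> p) / (q - p) \<le> (\<phi> x - \<phi> q) / (x - q)"
    by (metis minus_diff_eq minus_divide_divide)
  then show ?thesis using \<open>q < x\<close> by (simp add: pos_le_divide_eq)
qed simp

lemma ennreal_max_0_right [simp]: "ennreal (max x 0) = ennreal x"
  by (metis ennreal_max_0 max.commute)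

lemma ennreal_add_le: "ennreal (a + b) \<le> ennreal a + ennreal b"
proof -
  have "ennreal (a + b) \<le> ennreal (max a 0 + max b 0)" by (rule ennreal_leI) simp
  then show ?thesis by simp
qed

lemma gen_expectation_nonneg:
  assumes "\<And>x. 0 \<le> f x"
  shows "gen_expectation M f = enn2ereal (\<integral>\<^sup>+ x. ennreal (f x) \<partial>M)"
  using assms by (simp add: gen_expectation_def ennreal_neg zero_ennreal.rep_eq)

lemma exp_well_defined_nonneg: "(\<And>x. 0 \<le> f x) \<Longrightarrow> exp_well_defined M f"
  by (simp add: exp_well_defined_def max_def ennreal_neg)

lemma gen_expectation_mono:
  assumes "\<And>x. f x \<le> g x"
  shows "gen_expectation M f \<le> gen_expectation M g"
proof -
  have "(\<integral>\<^sup>+ x. ennreal (f x) \<partial>M) \<le> (\<integral>\<^sup>+ x. ennreal (g x) \<partial>M)"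
    and "(\<integral>\<^sup>+ x. ennreal (- g x) \<partial>M) \<le> (\<integral>\<^sup>+ x. ennreal (- f x) \<partial>M)"
    using assms by (auto intro!: nn_integral_mono ennreal_leI)
  then show ?thesis
    unfolding gen_expectation_def by (intro ereal_minus_mono) (simp_all add: less_eq_ennreal.rep_eq)
qed

lemma gen_expectation_integrable:
  assumes "integrable M f"
  shows "gen_expectation M f = ereal (integral\<^sup>L M f)"
proof -
  have "(\<integral>\<^sup>+ x. ennreal (f x) \<partial>M) \<noteq> \<infinity>" "(\<integral>\<^sup>+ x. ennreal (- f x) \<partial>M) \<noteq> \<infinity>"
    using assms by (simp_all add: real_integrable_def)
  moreover have "enn2ereal x = ereal (enn2real x)" if "x \<noteq> \<infinity>" for x
    using that by (cases x rule: ennreal_cases) auto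
  ultimately show ?thesis
    unfolding gen_expectation_def real_lebesgue_integral_def[OF assms] by simp
qed

lemma gen_expectation_const_add_nonneg:
  assumes "prob_space P" and g: "g \<in> borel_measurable P" "\<And>\<omega>. 0 \<le> g \<omega>"
  shows "gen_expectation P (\<lambda>\<omega>. a + g \<omega>) = ereal a + enn2ereal (\<integral>\<^sup>+ \<omega>. ennreal (g \<omega>) \<partial>P)"
proof -
  interpret prob_space P by fact
  show ?thesis
  proof (cases "(\<integral>\<^sup>+ \<omega>. ennreal (g \<omega>) \<partial>P) = \<infinity>")
    case True
    have "(\<integral>\<^sup>+ \<omega>. ennreal (g \<omega>) \<partial>P) \<le> (\<integral>\<^sup>+ \<omega>. ennreal (a + g \<omega>) + ennreal (- a) \<partial>P)"
      using ennreal_add_le[of "a + g _" "- a"] by (intro nn_integral_mono) simp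
    also have "\<dots> = (\<integral>\<^sup>+ \<omega>. ennreal (a + g \<omega>) \<partial>P) + ennreal (- a)"
      using g by (subst nn_integral_add) (auto simp: emeasure_space_1)
    finally have pos: "(\<integral>\<^sup>+ \<omega>. ennreal (a + g \<omega>) \<partial>P) = \<infinity>"
      using True by (simp add: ennreal_add_eq_top top_unique)
    have "(\<integral>\<^sup>+ \<omega>. ennreal (- (a + g \<omega>)) \<partial>P) \<le> (\<integral>\<^sup>+ \<omega>. ennreal (- a) \<partial>P)"
      using g by (intro nn_integral_mono ennreal_leI) auto
    then have neg: "(\<integral>\<^sup>+ \<omega>. ennreal (- (a + g \<omega>)) \<partial>P) \<noteq> \<infinity>"
      by (auto simp: emeasure_space_1 top_unique)
    show ?thesis
      using True pos neg unfolding gen_expectation_def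
      by (cases "enn2ereal (\<integral>\<^sup>+ \<omega>. ennreal (- (a + g \<omega>)) \<partial>P)") auto
  next
    case False
    then have int: "integrable P g"
      using g by (intro integrableI_nonneg) (auto simp: top.not_eq_extremum)
    then have "gen_expectation P (\<lambda>\<omega>. a + g \<omega>) = ereal (a + integral\<^sup>L P g)"
      by (subst gen_expectation_integrable) (auto simp: prob_space)
    moreover have "(\<integral>\<^sup>+ \<omega>. ennreal (g \<omega>) \<partial>P) = ennreal (integral\<^sup>L P g)"
      using int g by (intro nn_integral_eq_integral) auto
    ultimately show ?thesis
      using g by (simp add: integral_nonneg)
  qed
qed

lemma nn_integral_distr_eq:
  fixes h :: "real \<Rightarrow> ennreal"
  assumes "V \<in> borel_measurable N" "U \<in> borel_measurable M" "distr N borel V = distr M borel U"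
    and "h \<in> borel_measurable borel"
  shows "(\<integral>\<^sup>+ \<omega>. h (V \<omega>) \<partial>N) = (\<integral>\<^sup>+ \<omega>. h (U \<omega>) \<partial>M)"
  using assms nn_integral_distr[of V N borel h] nn_integral_distr[of U M borel h] by simp

lemma
  fixes u :: "real \<Rightarrow> real"
  assumes "V \<in> borel_measurable N" "U \<in> borel_measurable M" "distr N borel V = distr M borel U"
    and "u \<in> borel_measurable borel"
  shows gen_expectation_distr_eq:
      "gen_expectation N (\<lambda>\<omega>. u (V \<omega>)) = gen_expectation M (\<lambda>\<omega>. u (U \<omega>))"
    and exp_well_defined_distr_eq:
      "exp_well_defined N (\<lambda>\<omega>. u (V \<omega>)) \<longleftrightarrow> exp_well_defined M (\<lambda>\<omega>. u (U \<omega>))"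
proof -
  have "(\<integral>\<^sup>+ \<omega>. ennreal (u (V \<omega>)) \<partial>N) = (\<integral>\<^sup>+ \<omega>. ennreal (u (U \<omega>)) \<partial>M)"
    and "(\<integral>\<^sup>+ \<omega>. ennreal (- u (V \<omega>)) \<partial>N) = (\<integral>\<^sup>+ \<omega>. ennreal (- u (U \<omega>)) \<partial>M)"
    using nn_integral_distr_eq[OF assms(1-3), of "\<lambda>x. ennreal (u x)"]
      nn_integral_distr_eq[OF assms(1-3), of "\<lambda>x. ennreal (- u x)"] assms(4) by simp_all
  then show "gen_expectation N (\<lambda>\<omega>. u (V \<omega>)) = gen_expectation M (\<lambda>\<omega>. u (U \<omega>))"
    and "exp_well_defined N (\<lambda>\<omega>. u (V \<omega>)) \<longleftrightarrow> exp_well_defined M (\<lambda>\<omega>. u (U \<omega>))"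
    by (simp_all add: gen_expectation_def exp_well_defined_def)
qed

section \<open>Convex and increasing convex order\<close>

text \<open>The increasing convex order, through its characterisation by stop-loss transforms.\<close>
definition icx_le :: "'a measure \<Rightarrow> ('a \<Rightarrow> real) \<Rightarrow> 'b measure \<Rightarrow> ('b \<Rightarrow> real) \<Rightarrow> bool" where
  "icx_le M T N S \<longleftrightarrow> (\<forall>t. (\<integral>\<^sup>+ \<omega>. ennreal (T \<omega> - t) \<partial>M) \<le> (\<integral>\<^sup>+ \<omega>. ennreal (S \<omega> - t) \<partial>N))"

lemma cx_le_nn_integral:
  assumes "cx_le M X N Z" "convex_on UNIV u" "\<And>x. 0 \<le> u x"
  shows "(\<integral>\<^sup>+ \<omega>. ennreal (u (X \<omega>)) \<partial>M) \<le> (\<integral>\<^sup>+ \<omega>. ennreal (u (Z \<omega>)) \<partial>N)"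
proof -
  have "gen_expectation M (\<lambda>\<omega>. u (X \<omega>)) \<le> gen_expectation N (\<lambda>\<omega>. u (Z \<omega>))"
    using assms unfolding cx_le_def by (simp add: exp_well_defined_nonneg)
  then show ?thesis
    using assms(3) by (simp add: gen_expectation_nonneg less_eq_ennreal.rep_eq)
qed

lemma cx_le_imp_icx_le: "cx_le M X N Z \<Longrightarrow> icx_le M X N Z"
  unfolding icx_le_def
  using cx_le_nn_integral[OF _ convex_on_hinge] by fastforce

lemma cx_le_uminus:
  assumes "cx_le M X N Z"
  shows "cx_le M (\<lambda>\<omega>. - X \<omega>) N (\<lambda>\<omega>. - Z \<omega>)"
  unfolding cx_le_def
proof (intro allI impI)
  fix u :: "real \<Rightarrow> real"
  assume "convex_on UNIV u" "exp_well_defined M (\<lambda>\<omega>. u (- X \<omega>))"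
    "exp_well_defined N (\<lambda>\<omega>. u (- Z \<omega>))"
  then show "gen_expectation M (\<lambda>\<omega>. u (- X \<omega>)) \<le> gen_expectation N (\<lambda>\<omega>. u (- Z \<omega>))"
    using assms convex_on_comp_uminus unfolding cx_le_def by fastforce
qed

lemma cx_le_distr_eq:
  assumes "cx_le M X N' Z" "Z \<in> borel_measurable N'" "Z' \<in> borel_measurable N"
    and "distr N borel Z' = distr N' borel Z"
  shows "cx_le M X N Z'"
  using assms convex_on_borel_measurable
  unfolding cx_le_def by (metis gen_expectation_distr_eq exp_well_defined_distr_eq)

section \<open>Sums of comonotonic pairs\<close>

lemma comonotonic_uminus:
  assumes "comonotonic N Z W"
  shows "comonotonic N (\<lambda>\<omega>. - Z \<omega>) (\<lambda>\<omega>. - W \<omega>)"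
proof -
  obtain S :: "_ \<Rightarrow> real" and f g :: "real \<Rightarrow> real"
    where S: "S \<in> borel_measurable N" and "mono f" "mono g"
    and ae: "AE \<omega> in N. Z \<omega> = f (S \<omega>) \<and> W \<omega> = g (S \<omega>)"
    using assms unfolding comonotonic_def by blast
  have "mono (\<lambda>x. - f (- x))" "mono (\<lambda>x. - g (- x))"
    using \<open>mono f\<close> \<open>mono g\<close> by (auto intro!: monoI monoD[of f] monoD[of g])
  moreover have "AE \<omega> in N. - Z \<omega> = - f (- (- S \<omega>)) \<and> - W \<omega> = - g (- (- S \<omega>))"
    using ae by eventually_elim simp
  ultimately show ?thesis
    using S unfolding comonotonic_def
    by (intro exI[of _ "\<lambda>\<omega>. - S \<omega>"] exI[of _ "\<lambda>x. - f (- x)"] exI[of _ "\<lambda>x. - g (- x)"]) auto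
qed

lemma mono_sum_excess_split:
  fixes f g :: "'a::linorder \<Rightarrow> real"
  assumes "mono f" "mono g"
  obtains t1 where "\<And>s. ennreal (f s + g s - t) = ennreal (f s - t1) + ennreal (g s - (t - t1))"
proof -
  define lo where "lo s = (if f s + g s \<le> t then f s else t - g s)" for s
  define up where "up s = (if f s + g s \<le> t then t - g s else f s)" for s
  have lo_le_up: "lo s \<le> up s'" for s s'
  proof (cases "s \<le> s'")
    case True
    then show ?thesis
      using monoD[OF assms(1) True] monoD[OF assms(2) True] unfolding lo_def up_def by auto
  next
    case False
    then have "s' \<le> s" by simp
    then show ?thesis
      using monoD[OF assms(1)] monoD[OF assms(2)] unfolding lo_def up_def by force
  qed
  define t1 where "t1 = Sup (range lo)"
  have "bdd_above (range lo)"
    using lo_le_up by (intro bdd_aboveI2)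
  then have lo: "lo s \<le> t1" for s
    unfolding t1_def by (intro cSup_upper) auto
  have up: "t1 \<le> up s" for s
    unfolding t1_def using lo_le_up by (intro cSup_least) auto
  show thesis
  proof (rule that)
    fix s
    show "ennreal (f s + g s - t) = ennreal (f s - t1) + ennreal (g s - (t - t1))"
    proof (cases "f s + g s \<le> t")
      case True
      then show ?thesis using lo[of s] up[of s] by (simp add: lo_def up_def ennreal_neg)
    next
      case False
      then have "t1 \<le> f s" "t - t1 \<le> g s" using lo[of s] up[of s] by (auto simp: lo_def up_def)
      then show ?thesis by (simp flip: ennreal_plus)
    qed
  qed
qed

lemma icx_le_add_comonotonic:
  assumes X: "X \<in> borel_measurable M" and Y: "Y \<in> borel_measurable M"
    and Z: "Z \<in> borel_measurable N" and W: "W \<in> borel_measurable N"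
    and XZ: "icx_le M X N Z" and YW: "icx_le M Y N W" and "comonotonic N Z W"
  shows "icx_le M (\<lambda>\<omega>. X \<omega> + Y \<omega>) N (\<lambda>\<omega>. Z \<omega> + W \<omega>)"
  unfolding icx_le_def
proof
  fix t
  obtain S :: "_ \<Rightarrow> real" and f g :: "real \<Rightarrow> real" where "mono f" "mono g"
    and ae: "AE \<omega> in N. Z \<omega> = f (S \<omega>) \<and> W \<omega> = g (S \<omega>)"
    using \<open>comonotonic N Z W\<close> unfolding comonotonic_def by blast
  obtain t1 where split: "\<And>s. ennreal (f s + g s - t) = ennreal (f s - t1) + ennreal (g s - (t - t1))"
    using mono_sum_excess_split[OF \<open>mono f\<close> \<open>mono g\<close>] by blast
  have "(\<integral>\<^sup>+ \<omega>. ennreal (X \<omega> + Y \<omega> - t) \<partial>M)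
      \<le> (\<integral>\<^sup>+ \<omega>. ennreal (X \<omega> - t1) + ennreal (Y \<omega> - (t - t1)) \<partial>M)"
    using ennreal_add_le[of "X \<omega> - t1" "Y \<omega> - (t - t1)" for \<omega>]
    by (intro nn_integral_mono) (simp add: add_diff_eq)
  also have "\<dots> = (\<integral>\<^sup>+ \<omega>. ennreal (X \<omega> - t1) \<partial>M) + (\<integral>\<^sup>+ \<omega>. ennreal (Y \<omega> - (t - t1)) \<partial>M)"
    using X Y by (intro nn_integral_add) auto
  also have "\<dots> \<le> (\<integral>\<^sup>+ \<omega>. ennreal (Z \<omega> - t1) \<partial>N) + (\<integral>\<^sup>+ \<omega>. ennreal (W \<omega> - (t - t1)) \<partial>N)"
    using XZ YW unfolding icx_le_def by (intro add_mono) auto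
  also have "\<dots> = (\<integral>\<^sup>+ \<omega>. ennreal (Z \<omega> - t1) + ennreal (W \<omega> - (t - t1)) \<partial>N)"
    using Z W by (intro nn_integral_add[symmetric]) auto
  also have "\<dots> = (\<integral>\<^sup>+ \<omega>. ennreal (Z \<omega> + W \<omega> - t) \<partial>N)"
    using ae by (intro nn_integral_cong_AE) (auto simp: split)
  finally show "(\<integral>\<^sup>+ \<omega>. ennreal (X \<omega> + Y \<omega> - t) \<partial>M) \<le> (\<integral>\<^sup>+ \<omega>. ennreal (Z \<omega> + W \<omega> - t) \<partial>N)" .
qed

section \<open>Approximation by hinge functions\<close>

definition grid :: "real \<Rightarrow> real \<Rightarrow> nat \<Rightarrow> real" where
  "grid a h i = a + real i * h"

definition grid_slope :: "(real \<Rightarrow> real) \<Rightarrow> real \<Rightarrow> real \<Rightarrow> nat \<Rightarrow> real" where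
  "grid_slope \<phi> a h i = (\<phi> (grid a h (Suc i)) - \<phi> (grid a h i)) / h"

fun slope_jump :: "(real \<Rightarrow> real) \<Rightarrow> real \<Rightarrow> real \<Rightarrow> nat \<Rightarrow> real" where
  "slope_jump \<phi> a h 0 = grid_slope \<phi> a h 0"
| "slope_jump \<phi> a h (Suc i) = grid_slope \<phi> a h (Suc i) - grid_slope \<phi> a h i"

text \<open>On the cell \<open>[grid a h k, grid a h (k + 1)]\<close> this is the secant of \<open>\<phi> - \<phi> a\<close> over
  the previous cell, translated to the right by one mesh width; for convex increasing \<open>\<phi>\<close> it
  therefore lies below \<open>\<phi> - \<phi> a\<close> and lags behind \<open>\<phi>\<close> by at most two mesh widths.\<close>
definition hinge_interp :: "(real \<Rightarrow> real) \<Rightarrow> real \<Rightarrow> real \<Rightarrow> nat \<Rightarrow> real \<Rightarrow> real" where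
  "hinge_interp \<phi> a h m x = (\<Sum>j<m. slope_jump \<phi> a h j * max (x - grid a h (Suc j)) 0)"

lemma grid_0 [simp]: "grid a h 0 = a"
  by (simp add: grid_def)

lemma grid_Suc: "grid a h (Suc i) = grid a h i + h"
  by (simp add: grid_def algebra_simps)

lemma grid_mono: "0 < h \<Longrightarrow> i \<le> j \<Longrightarrow> grid a h i \<le> grid a h j"
  by (simp add: grid_def mult_right_mono)

lemma grid_slope_mult: "0 < h \<Longrightarrow> grid_slope \<phi> a h i * h = \<phi> (grid a h (Suc i)) - \<phi> (grid a h i)"
  by (simp add: grid_slope_def)

lemma grid_slope_nonneg: "0 < h \<Longrightarrow> mono \<phi> \<Longrightarrow> 0 \<le> grid_slope \<phi> a h i"
  by (simp add: grid_slope_def grid_Suc monoD)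

lemma grid_slope_le_Suc:
  assumes "0 < h" "convex_on UNIV \<phi>"
  shows "grid_slope \<phi> a h i \<le> grid_slope \<phi> a h (Suc i)"
proof -
  let ?p = "grid a h i" and ?q = "grid a h (Suc i)" and ?r = "grid a h (Suc (Suc i))"
  have "?p < ?q" "?q < ?r" using assms(1) by (simp_all add: grid_Suc)
  then have "(\<phi> ?p - \<phi> ?q) / (?p - ?q) \<le> (\<phi> ?q - \<phi> ?r) / (?q - ?r)"
    using convex_on_slope_le[OF assms(2) UNIV_I UNIV_I] by (meson order_trans)
  then have "(\<phi> ?q - \<phi> ?p) / (?q - ?p) \<le> (\<phi> ?r - \<phi> ?q) / (?r - ?q)"
    by (metis minus_diff_eq minus_divide_divide)
  then show ?thesis by (simp add: grid_slope_def grid_Suc)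
qed

lemma slope_jump_nonneg:
  assumes "0 < h" "convex_on UNIV \<phi>" "mono \<phi>"
  shows "0 \<le> slope_jump \<phi> a h i"
  using assms grid_slope_nonneg grid_slope_le_Suc by (cases i) auto

lemma hinge_interp_truncate:
  assumes "0 < h" "k \<le> m" "x \<le> grid a h (Suc k)"
  shows "hinge_interp \<phi> a h m x = hinge_interp \<phi> a h k x"
proof -
  have "max (x - grid a h (Suc j)) 0 = 0" if "k \<le> j" for j
    using grid_mono[OF assms(1), of "Suc k" "Suc j" a] that assms(3) by simp
  then have "(\<Sum>j\<in>{k..<m}. slope_jump \<phi> a h j * max (x - grid a h (Suc j)) 0) = 0"
    by simp
  then show ?thesis
    unfolding hinge_interp_def lessThan_atLeast0
    by (simp add: sum.atLeastLessThan_concat[OF le0 assms(2), symmetric])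
qed

lemma hinge_interp_Suc_eq:
  assumes "0 < h" "grid a h (Suc n) \<le> x"
  shows "hinge_interp \<phi> a h (Suc n) x
    = \<phi> (grid a h n) - \<phi> a + grid_slope \<phi> a h n * (x - grid a h (Suc n))"
  using assms(2)
proof (induction n)
  case 0
  then show ?case by (simp add: hinge_interp_def)
next
  case (Suc n)
  then have "grid a h (Suc n) \<le> x"
    using grid_mono[OF assms(1), of "Suc n" "Suc (Suc n)" a] by simp
  then have "hinge_interp \<phi> a h (Suc (Suc n)) x = \<phi> (grid a h n) - \<phi> a
      + grid_slope \<phi> a h n * (x - grid a h (Suc n))
      + (grid_slope \<phi> a h (Suc n) - grid_slope \<phi> a h n) * (x - grid a h (Suc (Suc n)))"
    using Suc by (simp add: hinge_interp_def)
  also have "\<dots> = \<phi> (grid a h n) + grid_slope \<phi> a h n * h - \<phi> a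
      + grid_slope \<phi> a h (Suc n) * (x - grid a h (Suc (Suc n)))"
    by (simp add: grid_Suc algebra_simps)
  finally show ?case by (simp add: grid_slope_mult[OF assms(1)])
qed

lemma hinge_interp_le:
  assumes "0 < h" "convex_on UNIV \<phi>" "mono \<phi>" "\<And>y. 0 \<le> \<phi> y"
  shows "hinge_interp \<phi> a h m x \<le> \<phi> x"
proof (induction m)
  case 0
  then show ?case using assms(4) by (simp add: hinge_interp_def)
next
  case (Suc m)
  show ?case
  proof (cases "x \<le> grid a h (Suc m)")
    case True
    then show ?thesis using Suc.IH hinge_interp_truncate[OF assms(1), of m "Suc m" x] by simp
  next
    case False
    have "grid a h m < grid a h (Suc m)" using assms(1) by (simp add: grid_Suc)
    then have "\<phi> (grid a h (Suc m)) + (\<phi> (grid a h (Suc m)) - \<phi> (grid a h m))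
        / (grid a h (Suc m) - grid a h m) * (x - grid a h (Suc m)) \<le> \<phi> x"
      using False by (intro convex_on_secant_extension_le[OF assms(2)]) auto
    then have "\<phi> (grid a h (Suc m)) + grid_slope \<phi> a h m * (x - grid a h (Suc m)) \<le> \<phi> x"
      by (simp add: grid_slope_def grid_Suc)
    moreover have "0 \<le> grid_slope \<phi> a h m * h" "0 \<le> \<phi> a"
      using grid_slope_nonneg[OF assms(1,3)] assms(1,4) by simp_all
    ultimately show ?thesis
      using False hinge_interp_Suc_eq[OF assms(1), of a m x \<phi>] grid_slope_mult[OF assms(1), of \<phi> a m]
      by simp
  qed
qed

lemma hinge_interp_ge:
  assumes "0 < h" "mono \<phi>" "grid a h 1 \<le> x" "x \<le> grid a h m"
  shows "\<phi> (x - 2 * h) - \<phi> a \<le> hinge_interp \<phi> a h m x"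
  using assms(4)
proof (induction m)
  case 0
  then show ?case using assms(1,3) by (simp add: grid_def)
next
  case (Suc m)
  note x_le = \<open>x \<le> grid a h (Suc m)\<close>
  show ?case
  proof (cases "x \<le> grid a h m")
    case True
    then show ?thesis
      using Suc.IH grid_mono[OF assms(1), of m "Suc m" a] hinge_interp_truncate[OF assms(1), of m "Suc m" x]
      by simp
  next
    case False
    show ?thesis
    proof (cases m)
      case 0
      then have "x = a + h" using False x_le assms(3) by (simp add: grid_def)
      then show ?thesis
        using monoD[OF assms(2), of "a - h" a] assms(1) by (simp add: hinge_interp_def grid_def)
    next
      case (Suc n)
      have "hinge_interp \<phi> a h (Suc m) x = hinge_interp \<phi> a h m x"
        using x_le by (intro hinge_interp_truncate[OF assms(1)]) auto
      also have "\<dots> = \<phi> (grid a h n) - \<phi> a + grid_slope \<phi> a h n * (x - grid a h (Suc n))"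
        using False unfolding \<open>m = Suc n\<close> by (intro hinge_interp_Suc_eq[OF assms(1)]) auto
      finally have "\<phi> (grid a h n) - \<phi> a \<le> hinge_interp \<phi> a h (Suc m) x"
        using False \<open>m = Suc n\<close> grid_slope_nonneg[OF assms(1,2), of a n] by simp
      moreover have "x - 2 * h \<le> grid a h n"
        using x_le \<open>m = Suc n\<close> by (simp add: grid_Suc)
      ultimately show ?thesis using monoD[OF assms(2)] by fastforce
    qed
  qed
qed

lemma nn_integral_hinge_interp:
  assumes "0 < h" "convex_on UNIV \<phi>" "mono \<phi>" and V: "V \<in> borel_measurable P"
  shows "(\<integral>\<^sup>+ \<omega>. ennreal (hinge_interp \<phi> a h m (V \<omega>)) \<partial>P)
    = (\<Sum>j<m. ennreal (slope_jump \<phi> a h j) * (\<integral>\<^sup>+ \<omega>. ennreal (V \<omega> - grid a h (Suc j)) \<partial>P))"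
proof -
  note jump_nonneg = slope_jump_nonneg[OF assms(1-3)]
  have "ennreal (hinge_interp \<phi> a h m x)
      = (\<Sum>j<m. ennreal (slope_jump \<phi> a h j) * ennreal (x - grid a h (Suc j)))" for x
    unfolding hinge_interp_def using jump_nonneg
    by (subst sum_ennreal[symmetric]) (auto simp: ennreal_mult)
  then have "(\<integral>\<^sup>+ \<omega>. ennreal (hinge_interp \<phi> a h m (V \<omega>)) \<partial>P)
      = (\<Sum>j<m. \<integral>\<^sup>+ \<omega>. ennreal (slope_jump \<phi> a h j) * ennreal (V \<omega> - grid a h (Suc j)) \<partial>P)"
    using V by (simp only:) (intro nn_integral_sum; simp)
  also have "\<dots> = (\<Sum>j<m. ennreal (slope_jump \<phi> a h j) * (\<integral>\<^sup>+ \<omega>. ennreal (V \<omega> - grid a h (Suc j)) \<partial>P))"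
    using V by (intro sum.cong refl nn_integral_cmult) (simp add: measurable_const)
  finally show ?thesis .
qed

text \<open>The grid has mesh \<open>1 / (n + 1)\<close> and covers \<open>[-(n + 1), n + 1]\<close>.\<close>
definition hinge_approx :: "(real \<Rightarrow> real) \<Rightarrow> nat \<Rightarrow> real \<Rightarrow> real" where
  "hinge_approx \<phi> n = hinge_interp \<phi> (- real (Suc n)) (inverse (real (Suc n))) (2 * (Suc n)\<^sup>2)"

lemma nonneg_if_mono_vanishing:
  fixes \<phi> :: "real \<Rightarrow> real"
  assumes "mono \<phi>" "\<And>x. x \<le> c \<Longrightarrow> \<phi> x = 0"
  shows "0 \<le> \<phi> x"
  using assms(2)[of c] assms(2)[of x] monoD[OF assms(1), of c x] by (cases "x \<le> c") auto

lemma hinge_approx_le: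
  assumes "convex_on UNIV \<phi>" "mono \<phi>" "\<And>y. 0 \<le> \<phi> y"
  shows "hinge_approx \<phi> n x \<le> \<phi> x"
  unfolding hinge_approx_def by (rule hinge_interp_le) (simp_all add: assms)

lemma hinge_approx_tendsto:
  assumes cv: "convex_on UNIV \<phi>" and mono: "mono \<phi>" and zero: "\<And>x. x \<le> c \<Longrightarrow> \<phi> x = 0"
  shows "(\<lambda>n. hinge_approx \<phi> n x) \<longlonglongrightarrow> \<phi> x"
proof (rule tendsto_sandwich)
  define h :: "nat \<Rightarrow> real" where "h n = inverse (real (Suc n))" for n
  obtain n0 :: nat where n0: "\<bar>x\<bar> + \<bar>c\<bar> + 2 \<le> real n0"
    using real_arch_simple by blast
  show "\<forall>\<^sub>F n in sequentially. \<phi> (x - 2 * h n) \<le> hinge_approx \<phi> n x"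
    using eventually_ge_at_top[of n0]
  proof eventually_elim
    case (elim n)
    have "0 < h n" "h n \<le> 1" by (simp_all add: h_def field_simps)
    moreover have "grid (- real (Suc n)) (h n) (2 * (Suc n)\<^sup>2) = real (Suc n)"
      by (simp add: grid_def h_def power2_eq_square field_simps)
    ultimately show ?case
      using elim n0 hinge_interp_ge[OF \<open>0 < h n\<close> mono, of "- real (Suc n)" x "2 * (Suc n)\<^sup>2"] zero
      unfolding hinge_approx_def h_def[symmetric] by (simp add: grid_def)
  qed
  show "\<forall>\<^sub>F n in sequentially. hinge_approx \<phi> n x \<le> \<phi> x"
    using nonneg_if_mono_vanishing[OF mono zero]
    by (intro always_eventually allI hinge_approx_le[OF cv mono])
  have "(\<lambda>n. x - 2 * h n) \<longlonglongrightarrow> x - 2 * 0"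
    unfolding h_def by (intro tendsto_intros LIMSEQ_inverse_real_of_nat)
  moreover have "isCont \<phi> (x - 2 * 0)"
    using convex_on_continuous[OF open_UNIV cv] by (simp add: continuous_on_eq_continuous_at)
  ultimately show "(\<lambda>n. \<phi> (x - 2 * h n)) \<longlonglongrightarrow> \<phi> x"
    using isCont_tendsto_compose by fastforce
qed simp

lemma nn_integral_mono_of_icx_le:
  fixes \<phi> :: "real \<Rightarrow> real" and T :: "'a \<Rightarrow> real" and S :: "'b \<Rightarrow> real"
  assumes cv: "convex_on UNIV \<phi>" and mono: "mono \<phi>" and zero: "\<And>x. x \<le> c \<Longrightarrow> \<phi> x = 0"
    and T: "T \<in> borel_measurable M" and S: "S \<in> borel_measurable N" and TS: "icx_le M T N S"
  shows "(\<integral>\<^sup>+ \<omega>. ennreal (\<phi> (T \<omega>)) \<partial>M) \<le> (\<integral>\<^sup>+ \<omega>. ennreal (\<phi> (S \<omega>)) \<partial>N)"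
proof -
  let ?F = "hinge_approx \<phi>"
  note nonneg = nonneg_if_mono_vanishing[OF mono zero]
  have F_measurable: "(\<lambda>\<omega>. ennreal (?F n (V \<omega>))) \<in> borel_measurable P"
    if "V \<in> borel_measurable P" for n V and P :: "'c measure"
    unfolding hinge_approx_def hinge_interp_def using that by measurable
  have F_le_S: "(\<integral>\<^sup>+ \<omega>. ennreal (?F n (T \<omega>)) \<partial>M) \<le> (\<integral>\<^sup>+ \<omega>. ennreal (?F n (S \<omega>)) \<partial>N)" for n
  proof -
    have h: "0 < inverse (real (Suc n))" by simp
    show ?thesis
      using TS unfolding hinge_approx_def icx_le_def
        nn_integral_hinge_interp[OF h cv mono T] nn_integral_hinge_interp[OF h cv mono S]
      by (intro sum_mono mult_left_mono) auto
  qed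
  have "(\<integral>\<^sup>+ \<omega>. ennreal (\<phi> (T \<omega>)) \<partial>M) = (\<integral>\<^sup>+ \<omega>. liminf (\<lambda>n. ennreal (?F n (T \<omega>))) \<partial>M)"
    using lim_imp_Liminf[OF trivial_limit_sequentially tendsto_ennrealI[OF hinge_approx_tendsto[OF cv mono zero]]]
    by simp
  also have "\<dots> \<le> liminf (\<lambda>n. \<integral>\<^sup>+ \<omega>. ennreal (?F n (T \<omega>)) \<partial>M)"
    using T F_measurable by (intro nn_integral_liminf) auto
  also have "\<dots> \<le> liminf (\<lambda>n. \<integral>\<^sup>+ \<omega>. ennreal (?F n (S \<omega>)) \<partial>N)"
    by (intro Liminf_mono always_eventually allI F_le_S)
  also have "\<dots> \<le> limsup (\<lambda>n. \<integral>\<^sup>+ \<omega>. ennreal (?F n (S \<omega>)) \<partial>N)"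
    by (intro Liminf_le_Limsup) simp
  also have "\<dots> \<le> (\<integral>\<^sup>+ \<omega>. ennreal (\<phi> (S \<omega>)) \<partial>N)"
    by (intro Limsup_bounded always_eventually allI nn_integral_mono ennreal_leI hinge_approx_le cv mono nonneg)
  finally show ?thesis .
qed

section \<open>From stop-loss order to convex order\<close>

lemma convex_on_decompose_at_argmin:
  fixes v :: "real \<Rightarrow> real"
  assumes cv: "convex_on UNIV v" and min: "\<And>y. v c \<le> v y"
  obtains R L where "convex_on UNIV R" "mono R" "\<And>x. x \<le> c \<Longrightarrow> R x = 0"
    and "convex_on UNIV L" "mono L" "\<And>x. x \<le> - c \<Longrightarrow> L x = 0"
    and "\<And>x. v x = v c + (R x + L (- x))"
proof
  have cv_reflect: "convex_on UNIV (\<lambda>x. v (- x))" and min_reflect: "v (- (- c)) \<le> v (- y)" for y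
    using convex_on_comp_uminus[OF cv] min by simp_all
  show "convex_on UNIV (\<lambda>x. v (max x c) - v c)" "mono (\<lambda>x. v (max x c) - v c)"
    using convex_on_comp_max_argmin[OF cv min] mono_comp_max_argmin[OF cv min]
    by (simp_all add: convex_on_diff concave_on_const mono_def)
  show "convex_on UNIV (\<lambda>x. v (- max x (- c)) - v c)" "mono (\<lambda>x. v (- max x (- c)) - v c)"
    using convex_on_comp_max_argmin[OF cv_reflect min_reflect]
      mono_comp_max_argmin[OF cv_reflect min_reflect]
    by (simp_all add: convex_on_diff concave_on_const mono_def)
qed (auto simp: max_def)

lemma gen_expectation_le_of_icx_le_argmin:
  fixes v :: "real \<Rightarrow> real" and T :: "'a \<Rightarrow> real" and S :: "'b \<Rightarrow> real"
  assumes "prob_space M" "prob_space N"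
    and T: "T \<in> borel_measurable M" and S: "S \<in> borel_measurable N"
    and TS: "icx_le M T N S" and TS_uminus: "icx_le M (\<lambda>\<omega>. - T \<omega>) N (\<lambda>\<omega>. - S \<omega>)"
    and cv: "convex_on UNIV v" and min: "\<And>y. v c \<le> v y"
  shows "gen_expectation M (\<lambda>\<omega>. v (T \<omega>)) \<le> gen_expectation N (\<lambda>\<omega>. v (S \<omega>))"
proof -
  obtain R L where R: "convex_on UNIV R" "mono R" "\<And>x. x \<le> c \<Longrightarrow> R x = 0"
    and L: "convex_on UNIV L" "mono L" "\<And>x. x \<le> - c \<Longrightarrow> L x = 0"
    and v: "\<And>x. v x = v c + (R x + L (- x))"
    using convex_on_decompose_at_argmin[OF cv min] by blast
  note R_nonneg = nonneg_if_mono_vanishing[OF R(2,3)]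
  note L_nonneg = nonneg_if_mono_vanishing[OF L(2,3)]
  have [measurable]: "R \<in> borel_measurable borel" "L \<in> borel_measurable borel"
    using R(1) L(1) by (simp_all add: convex_on_borel_measurable)
  have expand: "gen_expectation P (\<lambda>\<omega>. v (V \<omega>)) = ereal (v c)
      + enn2ereal ((\<integral>\<^sup>+ \<omega>. ennreal (R (V \<omega>)) \<partial>P) + (\<integral>\<^sup>+ \<omega>. ennreal (L (- V \<omega>)) \<partial>P))"
    if "prob_space P" "V \<in> borel_measurable P" for P :: "'c measure" and V
  proof -
    have "gen_expectation P (\<lambda>\<omega>. v (V \<omega>))
        = gen_expectation P (\<lambda>\<omega>. v c + (R (V \<omega>) + L (- V \<omega>)))"
      using v by (intro arg_cong[where f = "gen_expectation P"] ext)
    also have "\<dots> = ereal (v c) + enn2ereal (\<integral>\<^sup>+ \<omega>. ennreal (R (V \<omega>) + L (- V \<omega>)) \<partial>P)"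
      using that by (intro gen_expectation_const_add_nonneg add_nonneg_nonneg R_nonneg L_nonneg) auto
    also have "(\<integral>\<^sup>+ \<omega>. ennreal (R (V \<omega>) + L (- V \<omega>)) \<partial>P)
        = (\<integral>\<^sup>+ \<omega>. ennreal (R (V \<omega>)) \<partial>P) + (\<integral>\<^sup>+ \<omega>. ennreal (L (- V \<omega>)) \<partial>P)"
      using that by (simp only: ennreal_plus[OF R_nonneg L_nonneg]) (intro nn_integral_add; simp)
    finally show ?thesis .
  qed
  have "(\<integral>\<^sup>+ \<omega>. ennreal (R (T \<omega>)) \<partial>M) \<le> (\<integral>\<^sup>+ \<omega>. ennreal (R (S \<omega>)) \<partial>N)"
    using R T S TS by (rule nn_integral_mono_of_icx_le)
  moreover have "(\<integral>\<^sup>+ \<omega>. ennreal (L (- T \<omega>)) \<partial>M) \<le> (\<integral>\<^sup>+ \<omega>. ennreal (L (- S \<omega>)) \<partial>N)"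
    by (rule nn_integral_mono_of_icx_le[OF L _ _ TS_uminus]) (use T S in measurable)
  ultimately have "enn2ereal ((\<integral>\<^sup>+ \<omega>. ennreal (R (T \<omega>)) \<partial>M) + (\<integral>\<^sup>+ \<omega>. ennreal (L (- T \<omega>)) \<partial>M))
      \<le> enn2ereal ((\<integral>\<^sup>+ \<omega>. ennreal (R (S \<omega>)) \<partial>N) + (\<integral>\<^sup>+ \<omega>. ennreal (L (- S \<omega>)) \<partial>N))"
    by (simp only: less_eq_ennreal.rep_eq[symmetric] add_mono)
  then show ?thesis
    unfolding expand[OF assms(1) T] expand[OF assms(2) S] by (rule add_left_mono)
qed

lemma emeasure_abs_gt_tendsto_0:
  fixes S :: "'a \<Rightarrow> real"
  assumes "finite_measure N" "S \<in> borel_measurable N"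
  shows "(\<lambda>k. emeasure N {\<omega> \<in> space N. real k < \<bar>S \<omega>\<bar>}) \<longlonglongrightarrow> 0"
proof -
  interpret finite_measure N by fact
  have "(\<lambda>k. emeasure N {\<omega> \<in> space N. real k < \<bar>S \<omega>\<bar>})
      \<longlonglongrightarrow> emeasure N (\<Inter>k. {\<omega> \<in> space N. real k < \<bar>S \<omega>\<bar>})"
    using assms(2) by (intro Lim_emeasure_decseq) (auto simp: decseq_def)
  moreover have "(\<Inter>k. {\<omega> \<in> space N. real k < \<bar>S \<omega>\<bar>}) = {}"
  proof -
    have "\<not> real (nat \<lceil>\<bar>S \<omega>\<bar>\<rceil>) < \<bar>S \<omega>\<bar>" for \<omega>
      by (simp add: not_less)
    then show ?thesis by blast
  qed
  ultimately show ?thesis by simp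
qed

lemma nn_integral_max_const_tendsto:
  fixes u :: "real \<Rightarrow> real" and S :: "'a \<Rightarrow> real" and m :: "nat \<Rightarrow> real"
  assumes "finite_measure N" and S: "S \<in> borel_measurable N" and u: "u \<in> borel_measurable borel"
    and above: "\<And>k x. \<bar>x\<bar> \<le> real k \<Longrightarrow> m k \<le> u x" and bounded: "\<And>k. m k \<le> B"
  shows "(\<lambda>k. \<integral>\<^sup>+ \<omega>. ennreal (max (u (S \<omega>)) (m k)) \<partial>N) \<longlonglongrightarrow> (\<integral>\<^sup>+ \<omega>. ennreal (u (S \<omega>)) \<partial>N)"
proof -
  define A where "A k = {\<omega> \<in> space N. real k < \<bar>S \<omega>\<bar>}" for k :: nat
  define C where "C = ennreal (max B 0)"
  have A_sets: "A k \<in> sets N" for k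
    unfolding A_def using S u by measurable
  have upper: "(\<integral>\<^sup>+ \<omega>. ennreal (max (u (S \<omega>)) (m k)) \<partial>N)
      \<le> (\<integral>\<^sup>+ \<omega>. ennreal (u (S \<omega>)) \<partial>N) + C * emeasure N (A k)" for k
  proof -
    have "ennreal (max (u (S \<omega>)) (m k)) \<le> ennreal (u (S \<omega>)) + C * indicator (A k) \<omega>"
      if "\<omega> \<in> space N" for \<omega>
    proof (cases "\<omega> \<in> A k")
      case True
      have "ennreal (max (u (S \<omega>)) (m k)) \<le> ennreal (max (u (S \<omega>)) 0 + max B 0)"
        using bounded[of k] by (intro ennreal_leI) linarith
      then show ?thesis
        using True by (simp add: C_def ennreal_plus)
    next
      case False
      then have "m k \<le> u (S \<omega>)"
        using that above[of "S \<omega>" k] unfolding A_def by simp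
      then show ?thesis by simp
    qed
    then have "(\<integral>\<^sup>+ \<omega>. ennreal (max (u (S \<omega>)) (m k)) \<partial>N)
        \<le> (\<integral>\<^sup>+ \<omega>. ennreal (u (S \<omega>)) + C * indicator (A k) \<omega> \<partial>N)"
      by (intro nn_integral_mono)
    also have "\<dots> = (\<integral>\<^sup>+ \<omega>. ennreal (u (S \<omega>)) \<partial>N) + C * emeasure N (A k)"
      using S u A_sets by (subst nn_integral_add) (auto simp: nn_integral_cmult_indicator)
    finally show ?thesis .
  qed
  have "(\<lambda>k. (\<integral>\<^sup>+ \<omega>. ennreal (u (S \<omega>)) \<partial>N) + C * emeasure N (A k))
      \<longlonglongrightarrow> (\<integral>\<^sup>+ \<omega>. ennreal (u (S \<omega>)) \<partial>N) + C * 0"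
    using emeasure_abs_gt_tendsto_0[OF \<open>finite_measure N\<close> S] unfolding A_def
    by (intro tendsto_add tendsto_const ennreal_tendsto_cmult) (auto simp: C_def)
  then have upper_tendsto: "(\<lambda>k. (\<integral>\<^sup>+ \<omega>. ennreal (u (S \<omega>)) \<partial>N) + C * emeasure N (A k))
      \<longlonglongrightarrow> (\<integral>\<^sup>+ \<omega>. ennreal (u (S \<omega>)) \<partial>N)"
    by simp
  have lower: "(\<integral>\<^sup>+ \<omega>. ennreal (u (S \<omega>)) \<partial>N) \<le> (\<integral>\<^sup>+ \<omega>. ennreal (max (u (S \<omega>)) (m k)) \<partial>N)" for k
    by (intro nn_integral_mono ennreal_leI) simp
  show ?thesis
    by (intro tendsto_sandwich[OF always_eventually always_eventually tendsto_const upper_tendsto]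
        allI lower upper)
qed

lemma nn_integral_neg_max_const_tendsto:
  fixes u :: "real \<Rightarrow> real" and S :: "'a \<Rightarrow> real" and m :: "nat \<Rightarrow> real"
  assumes S: "S \<in> borel_measurable N" and u: "u \<in> borel_measurable borel"
    and above: "\<And>k x. \<bar>x\<bar> \<le> real k \<Longrightarrow> m k \<le> u x" and "decseq m"
  shows "(\<lambda>k. \<integral>\<^sup>+ \<omega>. ennreal (- max (u (S \<omega>)) (m k)) \<partial>N) \<longlonglongrightarrow> (\<integral>\<^sup>+ \<omega>. ennreal (- u (S \<omega>)) \<partial>N)"
proof (rule nn_integral_LIMSEQ)
  show "incseq (\<lambda>k \<omega>. ennreal (- max (u (S \<omega>)) (m k)))"
  proof (intro incseq_SucI le_funI ennreal_leI)
    fix k \<omega>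
    show "- max (u (S \<omega>)) (m k) \<le> - max (u (S \<omega>)) (m (Suc k))"
      using decseq_SucD[OF \<open>decseq m\<close>, of k] by (auto simp: max_def)
  qed
  show "(\<lambda>\<omega>. ennreal (- max (u (S \<omega>)) (m k))) \<in> borel_measurable N" for k
    using S u by measurable
  show "(\<lambda>k. ennreal (- max (u (S \<omega>)) (m k))) \<longlonglongrightarrow> ennreal (- u (S \<omega>))" for \<omega>
    using eventually_ge_at_top[of "nat \<lceil>\<bar>S \<omega>\<bar>\<rceil>"]
  proof (rule tendsto_eventually[OF eventually_mono])
    fix k assume "nat \<lceil>\<bar>S \<omega>\<bar>\<rceil> \<le> k"
    then have "m k \<le> u (S \<omega>)" by (intro above) linarith
    then show "ennreal (- max (u (S \<omega>)) (m k)) = ennreal (- u (S \<omega>))" by simp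
  qed
qed

lemma gen_expectation_max_const_tendsto:
  fixes u :: "real \<Rightarrow> real" and S :: "'a \<Rightarrow> real" and m :: "nat \<Rightarrow> real"
  assumes "prob_space N" and S: "S \<in> borel_measurable N" and u: "u \<in> borel_measurable borel"
    and above: "\<And>k x. \<bar>x\<bar> \<le> real k \<Longrightarrow> m k \<le> u x" and "decseq m" and bounded: "\<And>k. m k \<le> B"
    and fin: "(\<integral>\<^sup>+ \<omega>. ennreal (u (S \<omega>)) \<partial>N) \<noteq> \<infinity>"
  shows "(\<lambda>k. gen_expectation N (\<lambda>\<omega>. max (u (S \<omega>)) (m k)))
    \<longlonglongrightarrow> gen_expectation N (\<lambda>\<omega>. u (S \<omega>))"
proof -
  have "finite_measure N"
    using \<open>prob_space N\<close> by (simp add: prob_space_def)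
  then have "(\<lambda>k. enn2ereal (\<integral>\<^sup>+ \<omega>. ennreal (max (u (S \<omega>)) (m k)) \<partial>N)
      - enn2ereal (\<integral>\<^sup>+ \<omega>. ennreal (- max (u (S \<omega>)) (m k)) \<partial>N))
    \<longlonglongrightarrow> enn2ereal (\<integral>\<^sup>+ \<omega>. ennreal (u (S \<omega>)) \<partial>N) - enn2ereal (\<integral>\<^sup>+ \<omega>. ennreal (- u (S \<omega>)) \<partial>N)"
    using nn_integral_max_const_tendsto[OF _ S u above bounded]
      nn_integral_neg_max_const_tendsto[OF S u above \<open>decseq m\<close>] fin
    by (intro tendsto_diff_ereal_general) auto
  then show ?thesis
    by (simp add: gen_expectation_def)
qed

lemma continuous_obtain_minimizers_Icc:
  fixes u :: "real \<Rightarrow> real"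
  assumes "continuous_on UNIV u"
  obtains c where "\<And>k y. \<bar>y\<bar> \<le> real k \<Longrightarrow> u (c k) \<le> u y" "decseq (\<lambda>k. u (c k))"
proof -
  have "\<exists>c \<in> {- real k..real k}. \<forall>y \<in> {- real k..real k}. u c \<le> u y" for k
    using assms by (intro continuous_attains_inf compact_Icc) (auto intro: continuous_on_subset)
  then obtain c where c: "\<And>k. c k \<in> {- real k..real k}"
    and c_le: "\<And>k y. y \<in> {- real k..real k} \<Longrightarrow> u (c k) \<le> u y"
    by metis
  show thesis
  proof
    show "u (c k) \<le> u y" if "\<bar>y\<bar> \<le> real k" for k y
      using that by (intro c_le) auto
    show "decseq (\<lambda>k. u (c k))"
    proof (rule decseq_SucI)
      fix k
      have "c k \<in> {- real (Suc k)..real (Suc k)}"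
        using c[of k] by auto
      then show "u (c (Suc k)) \<le> u (c k)" by (rule c_le)
    qed
  qed
qed

lemma cx_le_of_icx_le:
  fixes T :: "'a \<Rightarrow> real" and S :: "'b \<Rightarrow> real"
  assumes M: "prob_space M" and N: "prob_space N"
    and T: "T \<in> borel_measurable M" and S: "S \<in> borel_measurable N"
    and TS: "icx_le M T N S" and TS_uminus: "icx_le M (\<lambda>\<omega>. - T \<omega>) N (\<lambda>\<omega>. - S \<omega>)"
  shows "cx_le M T N S"
  unfolding cx_le_def
proof (intro allI impI)
  fix u :: "real \<Rightarrow> real"
  assume cv: "convex_on UNIV u" and "exp_well_defined N (\<lambda>\<omega>. u (S \<omega>))"
  show "gen_expectation M (\<lambda>\<omega>. u (T \<omega>)) \<le> gen_expectation N (\<lambda>\<omega>. u (S \<omega>))"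
  proof (cases "(\<integral>\<^sup>+ \<omega>. ennreal (u (S \<omega>)) \<partial>N) = \<infinity>")
    case True
    then have "gen_expectation N (\<lambda>\<omega>. u (S \<omega>)) = \<infinity>"
      using \<open>exp_well_defined N (\<lambda>\<omega>. u (S \<omega>))\<close>
      by (cases "enn2ereal (\<integral>\<^sup>+ \<omega>. ennreal (- u (S \<omega>)) \<partial>N)")
        (auto simp: gen_expectation_def exp_well_defined_def)
    then show ?thesis by simp
  next
    case False
    obtain c where c_min: "\<And>k y. \<bar>y\<bar> \<le> real k \<Longrightarrow> u (c k) \<le> u y"
      and "decseq (\<lambda>k. u (c k))"
      using continuous_obtain_minimizers_Icc[OF convex_on_continuous[OF open_UNIV cv]] by blast
    have "gen_expectation M (\<lambda>\<omega>. u (T \<omega>)) \<le> gen_expectation N (\<lambda>\<omega>. max (u (S \<omega>)) (u (c k)))" for k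
    proof -
      have "convex_on UNIV (\<lambda>x. max (u x) (u (c k)))"
        by (intro convex_on_max cv) (simp add: convex_on_const)
      then have "gen_expectation M (\<lambda>\<omega>. max (u (T \<omega>)) (u (c k)))
          \<le> gen_expectation N (\<lambda>\<omega>. max (u (S \<omega>)) (u (c k)))"
        by (rule gen_expectation_le_of_icx_le_argmin[OF M N T S TS TS_uminus, where c = "c k"]) simp
      moreover have "gen_expectation M (\<lambda>\<omega>. u (T \<omega>)) \<le> gen_expectation M (\<lambda>\<omega>. max (u (T \<omega>)) (u (c k)))"
        by (rule gen_expectation_mono) simp
      ultimately show ?thesis by (rule order_trans[rotated])
    qed
    moreover have "(\<lambda>k. gen_expectation N (\<lambda>\<omega>. max (u (S \<omega>)) (u (c k))))
        \<longlonglongrightarrow> gen_expectation N (\<lambda>\<omega>. u (S \<omega>))"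
      using \<open>decseq (\<lambda>k. u (c k))\<close> c_min[where y = 0] False
      by (intro gen_expectation_max_const_tendsto[where B = "u 0", OF N S convex_on_borel_measurable[OF cv] c_min])
        auto
    ultimately show ?thesis
      by (intro LIMSEQ_le_const) auto
  qed
qed

theorem theorem4:
  fixes M :: "'a measure" and N :: "'b measure"
    and X Y Z W :: "'a \<Rightarrow> real" and Zco Wco :: "'b \<Rightarrow> real"
  assumes "prob_space M" and "atomless M"
    and "X \<in> borel_measurable M" and "Y \<in> borel_measurable M"
    and "Z \<in> borel_measurable M" and "W \<in> borel_measurable M"
    and "cx_le M X M Z" and "cx_le M Y M W"
    and "prob_space N"
    and "Zco \<in> borel_measurable N" and "Wco \<in> borel_measurable N"
    and "comonotonic N Zco Wco"
    and "distr N borel Zco = distr M borel Z" and "distr N borel Wco = distr M borel W"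
  shows "cx_le M (\<lambda>\<omega>. X \<omega> + Y \<omega>) N (\<lambda>\<omega>. Zco \<omega> + Wco \<omega>)"
proof -
  have X: "cx_le M X N Zco" and Y: "cx_le M Y N Wco"
    using cx_le_distr_eq assms(5-8,10,11,13,14) by blast+
  have "icx_le M (\<lambda>\<omega>. X \<omega> + Y \<omega>) N (\<lambda>\<omega>. Zco \<omega> + Wco \<omega>)"
    using X Y assms(3,4,10-12) by (intro icx_le_add_comonotonic cx_le_imp_icx_le) auto
  moreover have "icx_le M (\<lambda>\<omega>. - X \<omega> + - Y \<omega>) N (\<lambda>\<omega>. - Zco \<omega> + - Wco \<omega>)"
    using X Y assms(3,4,10-12)
    by (intro icx_le_add_comonotonic cx_le_imp_icx_le cx_le_uminus comonotonic_uminus) auto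
  ultimately show ?thesis
    using assms(1,3,4,9-11) by (intro cx_le_of_icx_le) auto
qed

end
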